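(* Let $(u,v),(u',v')\in F^2$ with $(u,v)\sim_{AC}(u',v')$, and let $\varphi$ be an endomorphism of $F$ such that $(\varphi(x),\varphi(y))\in\mathcal{B}_2$. Then $(\varphi(u),\varphi(v))\sim_{AC}(\varphi(u'),\varphi(v'))$.
   Context: $F=F(x,y)$ is the free group on $\{x,y\}$. $\mathcal{B}_2$ is the set of pairs $(r_1,r_2)\in F^2$ whose normal closure in $F$ is all of $F$. The Andrews–Curtis (AC) moves on a pair $(r_1,r_2)$ are: replace $r_i$ by $r_ir_j$ ($i\ne j$); replace $r_i$ by $r_i^{-1}$; replace $r_i$ by $w^{-1}r_iw$ for some $w\in F$. Two pairs are AC-equivalent, written $\sim_{AC}$, if one can be obtained from the other by a finite sequence of AC-moves. *)

theory Defs
  imports "HOL-Algebra.Algebra"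
begin

text \<open>The free group F(x,y), realised as reduced words. A letter is a pair
(g, e): g = False stands for the generator x, g = True for y; e = True marks
the inverse letter.\<close>

type_synonym letter = "bool \<times> bool"

definition inv_letter :: "letter \<Rightarrow> letter" where
  "inv_letter a = (fst a, \<not> snd a)"

fun reduce :: "letter list \<Rightarrow> letter list" where
  "reduce [] = []"
| "reduce (a # w) = (case reduce w of
       [] \<Rightarrow> [a]
     | b # v \<Rightarrow> (if b = inv_letter a then v else a # b # v))"

definition FG :: "letter list monoid" where
  "FG = \<lparr> carrier = {w. reduce w = w},
          monoid.mult = (\<lambda>u v. reduce (u @ v)),
          monoid.one = [] \<rparr>"

definition gen_x :: "letter list" where "gen_x = [(False, False)]"
definition gen_y :: "letter list" where "gen_y = [(True, False)]"

definition normal_closure :: "('a, 'b) monoid_scheme \<Rightarrow> 'a set \<Rightarrow> 'a set" where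
  "normal_closure G S =
     generate G {g \<otimes>\<^bsub>G\<^esub> s \<otimes>\<^bsub>G\<^esub> inv\<^bsub>G\<^esub> g | g s. g \<in> carrier G \<and> s \<in> S}"

definition B2 :: "(letter list \<times> letter list) set" where
  "B2 = {(r1, r2). r1 \<in> carrier FG \<and> r2 \<in> carrier FG \<and>
                   normal_closure FG {r1, r2} = carrier FG}"

inductive ac_move :: "letter list \<times> letter list \<Rightarrow> letter list \<times> letter list \<Rightarrow> bool" where
  mult1: "r1 \<in> carrier FG \<Longrightarrow> r2 \<in> carrier FG \<Longrightarrow> ac_move (r1, r2) (r1 \<otimes>\<^bsub>FG\<^esub> r2, r2)"
| mult2: "r1 \<in> carrier FG \<Longrightarrow> r2 \<in> carrier FG \<Longrightarrow> ac_move (r1, r2) (r1, r2 \<otimes>\<^bsub>FG\<^esub> r1)"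
| inv1: "r1 \<in> carrier FG \<Longrightarrow> r2 \<in> carrier FG \<Longrightarrow> ac_move (r1, r2) (inv\<^bsub>FG\<^esub> r1, r2)"
| inv2: "r1 \<in> carrier FG \<Longrightarrow> r2 \<in> carrier FG \<Longrightarrow> ac_move (r1, r2) (r1, inv\<^bsub>FG\<^esub> r2)"
| conj1: "r1 \<in> carrier FG \<Longrightarrow> r2 \<in> carrier FG \<Longrightarrow> w \<in> carrier FG \<Longrightarrow>
          ac_move (r1, r2) (inv\<^bsub>FG\<^esub> w \<otimes>\<^bsub>FG\<^esub> r1 \<otimes>\<^bsub>FG\<^esub> w, r2)"
| conj2: "r1 \<in> carrier FG \<Longrightarrow> r2 \<in> carrier FG \<Longrightarrow> w \<in> carrier FG \<Longrightarrow>
          ac_move (r1, r2) (r1, inv\<^bsub>FG\<^esub> w \<otimes>\<^bsub>FG\<^esub> r2 \<otimes>\<^bsub>FG\<^esub> w)"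

definition ac_equiv :: "letter list \<times> letter list \<Rightarrow> letter list \<times> letter list \<Rightarrow> bool" where
  "ac_equiv = ac_move\<^sup>*\<^sup>*"

end

theory Submission
  imports Defs
begin

text \<open>A homomorphism of F preserves products, inverses and conjugates, so it maps each
AC-move to an AC-move of the same kind and hence AC-equivalent pairs to AC-equivalent pairs.
The only real work is to show that the reduced-word model FG is a group.\<close>

definition cancel_cons :: "letter \<Rightarrow> letter list \<Rightarrow> letter list" where
  "cancel_cons a w = (case w of [] \<Rightarrow> [a] | b # v \<Rightarrow> (if b = inv_letter a then v else a # b # v))"

fun reduced :: "letter list \<Rightarrow> bool" where
  "reduced [] = True"
| "reduced [a] = True"
| "reduced (a # b # v) = (b \<noteq> inv_letter a \<and> reduced (b # v))"

lemma inv_letter_inv_letter [simp]: "inv_letter (inv_letter a) = a"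
  by (simp add: inv_letter_def)

lemma reduce_Cons: "reduce (a # w) = cancel_cons a (reduce w)"
  by (simp add: cancel_cons_def)

lemma reduced_Cons_tl: "reduced (b # v) \<Longrightarrow> reduced v"
  by (cases v) auto

lemma reduced_cancel_cons: "reduced w \<Longrightarrow> reduced (cancel_cons a w)"
  by (cases w) (auto simp: cancel_cons_def dest: reduced_Cons_tl)

lemma reduced_reduce: "reduced (reduce w)"
  by (induct w) (auto simp: reduce_Cons reduced_cancel_cons simp del: reduce.simps(2))

lemma reduce_eq_if_reduced: "reduced w \<Longrightarrow> reduce w = w"
  by (induct w rule: reduced.induct) (auto simp: reduce_Cons cancel_cons_def simp del: reduce.simps(2))

lemma reduce_reduce: "reduce (reduce w) = reduce w"
  by (simp add: reduce_eq_if_reduced reduced_reduce)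

lemma reduce_append: "reduce (u @ v) = foldr cancel_cons u (reduce v)"
  by (induct u) (auto simp: reduce_Cons simp del: reduce.simps(2))

lemma reduced_foldr_cancel_cons: "reduced z \<Longrightarrow> reduced (foldr cancel_cons u z)"
  by (induct u) (auto simp: reduced_cancel_cons)

lemma cancel_cons_inverse: "reduced t \<Longrightarrow> cancel_cons a (cancel_cons (inv_letter a) t) = t"
proof (cases t)
  case (Cons c t')
  assume t: "reduced t"
  show ?thesis
  proof (cases "c = a")
    case True
    have "reduced t'" using t Cons reduced_Cons_tl by blast
    moreover have "t' \<noteq> [] \<Longrightarrow> hd t' \<noteq> inv_letter a" using t Cons True
      by (cases t') auto
    ultimately show ?thesis using Cons True by (cases t') (auto simp: cancel_cons_def)
  next
    case False
    then show ?thesis using Cons by (auto simp: cancel_cons_def inv_letter_def)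
  qed
qed (simp add: cancel_cons_def)

lemma foldr_cancel_cons_cancel_cons:
  assumes "reduced z"
  shows "foldr cancel_cons (cancel_cons a r) z = cancel_cons a (foldr cancel_cons r z)"
proof (cases r)
  case (Cons b r')
  show ?thesis
  proof (cases "b = inv_letter a")
    case True
    have "reduced (foldr cancel_cons r' z)" using assms reduced_foldr_cancel_cons by blast
    then show ?thesis
      using Cons True cancel_cons_inverse[of "foldr cancel_cons r' z" a] by (simp add: cancel_cons_def)
  qed (simp add: Cons cancel_cons_def)
qed (simp add: cancel_cons_def)

lemma foldr_cancel_cons_reduce:
  "reduced z \<Longrightarrow> foldr cancel_cons (reduce u) z = foldr cancel_cons u z"
  by (induct u) (simp_all add: reduce_Cons foldr_cancel_cons_cancel_cons del: reduce.simps(2))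

lemma reduce_append_reduce_left: "reduce (reduce u @ v) = reduce (u @ v)"
  by (simp add: reduce_append foldr_cancel_cons_reduce reduced_reduce)

lemma reduce_append_reduce_right: "reduce (u @ reduce v) = reduce (u @ v)"
  by (simp add: reduce_append reduce_reduce)

lemma foldr_cancel_cons_inverse:
  "reduced t \<Longrightarrow> foldr cancel_cons (rev (map inv_letter w)) (foldr cancel_cons w t) = t"
proof (induct w arbitrary: t)
  case (Cons a w)
  then have "reduced (foldr cancel_cons w t)" using reduced_foldr_cancel_cons by blast
  then show ?case
    using Cons cancel_cons_inverse[of "foldr cancel_cons w t" "inv_letter a"] by simp
qed simp

lemma reduce_inverse_append: "reduce (rev (map inv_letter w) @ w) = []"
proof -
  have "reduce w = foldr cancel_cons w []"
    using reduce_append[of w "[]"] by simp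
  then have "reduce (rev (map inv_letter w) @ w)
      = foldr cancel_cons (rev (map inv_letter w)) (foldr cancel_cons w [])"
    by (simp only: reduce_append[of _ w])
  also have "\<dots> = []" using foldr_cancel_cons_inverse[of "[]" w] by simp
  finally show ?thesis .
qed

lemma group_FG: "group FG"
proof (rule groupI)
  fix x y z
  show "x \<otimes>\<^bsub>FG\<^esub> y \<otimes>\<^bsub>FG\<^esub> z = x \<otimes>\<^bsub>FG\<^esub> (y \<otimes>\<^bsub>FG\<^esub> z)"
    by (simp add: FG_def reduce_append_reduce_left reduce_append_reduce_right)
next
  fix x assume x: "x \<in> carrier FG"
  then show "\<one>\<^bsub>FG\<^esub> \<otimes>\<^bsub>FG\<^esub> x = x" by (simp add: FG_def)
  have "reduce (rev (map inv_letter x)) \<otimes>\<^bsub>FG\<^esub> x = \<one>\<^bsub>FG\<^esub>"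
    by (simp add: FG_def reduce_append_reduce_left reduce_inverse_append)
  then show "\<exists>y\<in>carrier FG. y \<otimes>\<^bsub>FG\<^esub> x = \<one>\<^bsub>FG\<^esub>"
    by (intro bexI[of _ "reduce (rev (map inv_letter x))"]) (auto simp: FG_def reduce_reduce)
qed (auto simp: FG_def reduce_reduce)

lemma ac_move_hom_image:
  assumes "\<phi> \<in> hom FG FG" and "ac_move p q"
  shows "ac_move (\<phi> (fst p), \<phi> (snd p)) (\<phi> (fst q), \<phi> (snd q))"
proof -
  interpret group_hom FG FG \<phi>
    using group_FG assms(1) by (simp add: group_hom_def group_hom_axioms_def)
  from assms(2) show ?thesis
    by induct (simp_all add: ac_move.intros)
qed

lemma ac_equiv_hom_image:
  assumes "\<phi> \<in> hom FG FG" and "ac_equiv p q"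
  shows "ac_equiv (\<phi> (fst p), \<phi> (snd p)) (\<phi> (fst q), \<phi> (snd q))"
  using assms(2) unfolding ac_equiv_def
  by induct (auto intro: rtranclp.rtrancl_into_rtrancl ac_move_hom_image[OF assms(1)])

theorem lemma2:
  assumes "u \<in> carrier FG" "v \<in> carrier FG" "u' \<in> carrier FG" "v' \<in> carrier FG"
    and "ac_equiv (u, v) (u', v')"
    and "\<phi> \<in> hom FG FG"
    and "(\<phi> gen_x, \<phi> gen_y) \<in> B2"
  shows "ac_equiv (\<phi> u, \<phi> v) (\<phi> u', \<phi> v')"
  using ac_equiv_hom_image[OF assms(6,5)] by simp

end
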